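(* Let $K\ge 2$, $D\ge 1$, and let $x(1),\dots,x(K)\in[0,1]^D$ be distinct points, with $d(i,j):=\|x(i)-x(j)\|$ and $\Delta_{x}:=\min_{i\neq j} d(i,j)>0$. Let $L>0$ and let $\mu_1,\dots,\mu_M\in[0,1]^K$ satisfy $|\mu_m(i)-\mu_m(j)|\le L\,d(i,j)$ for all $i,j\in[K]$ and $m\in[M]$. Let $L_m:=\max_{i\neq j}\frac{|\mu_m(i)-\mu_m(j)|}{d(i,j)}$. Assume: (i) (learnability) there are $\alpha>0$ and $\varepsilon_\alpha>0$ with $|\{m\in[M]: L_m\ge L-\varepsilon_\alpha\}|\ge \alpha M$; (ii) (minimal exploration) for some $\tau>0$, in every episode $m$ every arm $i\in[K]$ is pulled at least $\tau$ times. For each episode $m$ let $\hat\mu_m(i)$ be the empirical mean of the observed rewards of arm $i$ in episode $m$, let $\hat L_m:=\max_{i\neq j}\frac{|\hat\mu_m(i)-\hat\mu_m(j)|}{d(i,j)}$, and for $\beta\in(0,\alpha)$ let $\ell_\beta$ be the $\lceil \beta M\rceil$-th largest element of $(\hat L_m)_{m\in[M]}$. Let $\varepsilon_\beta>\varepsilon_\alpha$ and $\varepsilon':=\varepsilon_\beta-\varepsilon_\alpha$. If $$\tau\ \ge\ \frac{4}{\Delta_x^2(\varepsilon_\beta-\varepsilon_\alpha)^2}\left(\ln(2K)+\frac{1}{\min\{\beta,\alpha-\beta\}}\right),$$ then $$\Pr[L>\ell_\beta+\varepsilon_\beta]+\Pr[\ell_\beta>L+\varepsilon']\ \le\ 8M\exp\!\left(-\frac{\Delta_x^2\varepsilon'^2}{4}\min\{\beta,\alpha-\beta\}\,\tau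 M\right).$$
   Context: Setting: a sequence of $M$ independent episodes of a $K$-armed stochastic bandit. In episode $m$, each pull of arm $i$ yields a reward drawn i.i.d. from the Bernoulli distribution with mean $\mu_m(i)$. The arms have a known embedding $x(i)\in[0,1]^D$. $[M]=\{1,\dots,M\}$. *)

theory Defs
  imports "HOL-Analysis.Analysis" "HOL-Probability.Probability"
begin

text \<open>Arms are indexed by i < K, episodes by m < M (0-based). In episode m arm i
is pulled n m i times; sample point: (m,i,k) maps to the k-th reward of arm i in episode m.\<close>

definition min_gap :: "nat \<Rightarrow> (nat \<Rightarrow> real^'d::finite) \<Rightarrow> real" where
  "min_gap K x = Min {norm (x i - x j) | i j. i < K \<and> j < K \<and> i \<noteq> j}"

definition lip_const :: "nat \<Rightarrow> (nat \<Rightarrow> real^'d::finite) \<Rightarrow> (nat \<Rightarrow> real) \<Rightarrow> real" where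
  "lip_const K x f = Max {\<bar>f i - f j\<bar> / norm (x i - x j) | i j. i < K \<and> j < K \<and> i \<noteq> j}"

definition reward_pmf :: "nat \<Rightarrow> nat \<Rightarrow> (nat \<Rightarrow> nat \<Rightarrow> nat) \<Rightarrow> (nat \<Rightarrow> nat \<Rightarrow> real)
    \<Rightarrow> (nat \<times> nat \<times> nat \<Rightarrow> bool) pmf" where
  "reward_pmf M K n \<mu> = Pi_pmf {(m, i, k). m < M \<and> i < K \<and> k < n m i} False
      (\<lambda>(m, i, k). bernoulli_pmf (\<mu> m i))"

definition emp_mean :: "(nat \<Rightarrow> nat \<Rightarrow> nat) \<Rightarrow> (nat \<times> nat \<times> nat \<Rightarrow> bool) \<Rightarrow> nat \<Rightarrow> nat \<Rightarrow> real" where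
  "emp_mean n \<omega> m i = (\<Sum>k<n m i. of_bool (\<omega> (m, i, k))) / real (n m i)"

definition kth_largest :: "nat \<Rightarrow> real list \<Rightarrow> real" where
  "kth_largest k xs = rev (sort xs) ! (k - 1)"

end

theory Submission
  imports Defs
begin

text \<open>
  If every arm of episode \<open>m\<close> is estimated to within \<open>t = \<epsilon>' \<Delta>\<^sub>x / 2\<close>, every difference
  quotient of the empirical means differs from that of \<open>\<mu>\<^sub>m\<close> by at most \<open>2t / \<Delta>\<^sub>x = \<epsilon>'\<close>,
  so the empirical Lipschitz constant of episode \<open>m\<close> is within \<open>\<epsilon>'\<close> of \<open>L\<^sub>m \<le> L\<close>. Hence
  \<open>\<ell>\<^sub>\<beta> > L + \<epsilon>'\<close> forces at least \<open>\<lceil>\<beta>M\<rceil>\<close> badly estimated episodes, and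
  \<open>\<ell>\<^sub>\<beta> < L - \<epsilon>\<^sub>\<beta>\<close> forces at least \<open>(\<alpha> - \<beta>)M\<close> of them among the learnable episodes.
  By Hoeffding and a union bound over the arms an episode is bad with probability at most
  \<open>2K exp(-2\<tau>t\<^sup>2)\<close>; episodes are independent, and a union bound over the at most \<open>2\<^sup>M\<close>
  sets of \<open>r \<ge> min(\<beta>, \<alpha> - \<beta>) M\<close> episodes gives the claim, the lower bound on \<open>\<tau>\<close>
  absorbing the factors \<open>2K\<close> and \<open>2\<^sup>M\<close>.
\<close>

section \<open>Independence of events in product PMFs\<close>

definition determined_by :: "('a \<Rightarrow> 'b) set \<Rightarrow> 'a set \<Rightarrow> bool" where
  "determined_by A J \<longleftrightarrow> (\<forall>f g. (\<forall>x\<in>J. f x = g x) \<longrightarrow> (f \<in> A \<longleftrightarrow> g \<in> A))"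

lemma determined_byD:
  assumes "determined_by A J" "\<And>x. x \<in> J \<Longrightarrow> f x = g x"
  shows "f \<in> A \<longleftrightarrow> g \<in> A"
  using assms unfolding determined_by_def by blast

lemma determined_by_Int:
  assumes "determined_by A J" "determined_by B J'"
  shows "determined_by (A \<inter> B) (J \<union> J')"
  unfolding determined_by_def
proof (intro allI impI)
  fix f g :: "'a \<Rightarrow> 'b" assume "\<forall>x\<in>J \<union> J'. f x = g x"
  then show "f \<in> A \<inter> B \<longleftrightarrow> g \<in> A \<inter> B"
    using determined_byD[OF assms(1), of f g] determined_byD[OF assms(2), of f g] by auto
qed

lemma determined_by_INT:
  fixes A :: "'i \<Rightarrow> ('a \<Rightarrow> 'b) set"
  assumes "\<And>m. m \<in> S \<Longrightarrow> determined_by (A m) (J m)"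
  shows "determined_by (\<Inter>m\<in>S. A m) (\<Union>m\<in>S. J m)"
  unfolding determined_by_def
proof (intro allI impI)
  fix f g :: "'a \<Rightarrow> 'b" assume "\<forall>x\<in>\<Union>m\<in>S. J m. f x = g x"
  then have "f \<in> A m \<longleftrightarrow> g \<in> A m" if "m \<in> S" for m
    using determined_byD[OF assms[OF that], of f g] that by auto
  then show "f \<in> (\<Inter>m\<in>S. A m) \<longleftrightarrow> g \<in> (\<Inter>m\<in>S. A m)"
    by auto
qed

lemma measure_pair_pmf_Times:
  "measure_pmf.prob (pair_pmf M N) (A \<times> B) = measure_pmf.prob M A * measure_pmf.prob N B"
proof -
  have "measure_pmf.prob (pair_pmf M N) (A \<times> B) =
        measure_pmf.prob (pair_pmf M N) ((A \<inter> set_pmf M) \<times> (B \<inter> set_pmf N))"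
    by (subst measure_Int_set_pmf[symmetric]) (simp add: Times_Int_Times)
  also have "\<dots> = measure_pmf.prob M (A \<inter> set_pmf M) * measure_pmf.prob N (B \<inter> set_pmf N)"
    by (intro measure_pmf_prob_product countable_subset[OF _ countable_set_pmf]) auto
  finally show ?thesis
    by (simp add: measure_Int_set_pmf)
qed

lemma measure_Pi_pmf_determined:
  assumes "finite I" "J \<subseteq> I" "determined_by A J"
  shows "measure_pmf.prob (Pi_pmf I d p) A = measure_pmf.prob (Pi_pmf J d p) A"
proof -
  have "Pi_pmf J d p = map_pmf (\<lambda>f x. if x \<in> J then f x else d) (Pi_pmf I d p)"
    using assms by (intro Pi_pmf_subset) auto
  moreover have "(\<lambda>x. if x \<in> J then f x else d) \<in> A \<longleftrightarrow> f \<in> A" for f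
    by (rule determined_byD[OF assms(3)]) simp
  ultimately show ?thesis
    by (simp add: vimage_def)
qed

lemma measure_Pi_pmf_Int:
  assumes I: "finite I" and J: "J1 \<subseteq> I" "J2 \<subseteq> I" "J1 \<inter> J2 = {}"
    and A: "determined_by A J1" and B: "determined_by B J2"
  shows "measure_pmf.prob (Pi_pmf I d p) (A \<inter> B) =
         measure_pmf.prob (Pi_pmf I d p) A * measure_pmf.prob (Pi_pmf I d p) B"
proof -
  let ?glue = "\<lambda>(f, g) x. if x \<in> J1 then f x else g x"
  have "?glue (f, g) \<in> A \<longleftrightarrow> f \<in> A" for f g
    by (rule determined_byD[OF A]) simp
  moreover have "?glue (f, g) \<in> B \<longleftrightarrow> g \<in> B" for f g
    by (rule determined_byD[OF B]) (use J in auto)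
  ultimately have glue: "?glue -` (A \<inter> B) = A \<times> B"
    by auto
  have "measure_pmf.prob (Pi_pmf I d p) (A \<inter> B) = measure_pmf.prob (Pi_pmf (J1 \<union> J2) d p) (A \<inter> B)"
    using I J by (intro measure_Pi_pmf_determined determined_by_Int A B) auto
  also have "Pi_pmf (J1 \<union> J2) d p = map_pmf ?glue (pair_pmf (Pi_pmf J1 d p) (Pi_pmf J2 d p))"
    using I J by (intro Pi_pmf_union) (auto intro: finite_subset)
  also have "measure_pmf.prob \<dots> (A \<inter> B) =
             measure_pmf.prob (Pi_pmf J1 d p) A * measure_pmf.prob (Pi_pmf J2 d p) B"
    by (simp only: measure_map_pmf glue measure_pair_pmf_Times)
  also have "\<dots> = measure_pmf.prob (Pi_pmf I d p) A * measure_pmf.prob (Pi_pmf I d p) B"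
    using I J A B by (simp add: measure_Pi_pmf_determined)
  finally show ?thesis .
qed

lemma measure_Pi_pmf_INT:
  assumes I: "finite I" and "finite S"
    and J: "\<And>m. m \<in> S \<Longrightarrow> J m \<subseteq> I" "disjoint_family_on J S"
    and A: "\<And>m. m \<in> S \<Longrightarrow> determined_by (A m) (J m)"
  shows "measure_pmf.prob (Pi_pmf I d p) (\<Inter>m\<in>S. A m) =
         (\<Prod>m\<in>S. measure_pmf.prob (Pi_pmf I d p) (A m))"
  using \<open>finite S\<close> J A
proof (induction S rule: finite_induct)
  case empty
  then show ?case by simp
next
  case (insert a S)
  have "J a \<inter> (\<Union>m\<in>S. J m) = {}"
    using insert.hyps(2) insert.prems(2) by (fastforce simp: disjoint_family_on_def)
  then have "measure_pmf.prob (Pi_pmf I d p) (A a \<inter> (\<Inter>m\<in>S. A m)) =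
             measure_pmf.prob (Pi_pmf I d p) (A a) * measure_pmf.prob (Pi_pmf I d p) (\<Inter>m\<in>S. A m)"
    using insert.prems by (intro measure_Pi_pmf_Int[OF I]) (auto intro: determined_by_INT)
  also have "measure_pmf.prob (Pi_pmf I d p) (\<Inter>m\<in>S. A m) =
             (\<Prod>m\<in>S. measure_pmf.prob (Pi_pmf I d p) (A m))"
    using insert.prems by (intro insert.IH) (auto intro: disjoint_family_on_mono)
  finally show ?case
    using insert.hyps by simp
qed

lemma prob_card_events_ge:
  fixes A :: "'i \<Rightarrow> 'a set"
  assumes G: "finite G"
    and indep: "\<And>T. T \<subseteq> G \<Longrightarrow> measure_pmf.prob P (\<Inter>m\<in>T. A m) = (\<Prod>m\<in>T. measure_pmf.prob P (A m))"
    and bound: "\<And>m. m \<in> G \<Longrightarrow> measure_pmf.prob P (A m) \<le> q" and "0 \<le> q"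
  shows "measure_pmf.prob P {\<omega>. r \<le> card {m\<in>G. \<omega> \<in> A m}} \<le> 2 ^ card G * q ^ r"
proof -
  define F where "F = {T. T \<subseteq> G \<and> card T = r}"
  have F: "finite F" "F \<subseteq> Pow G"
    using G by (auto simp: F_def)
  have "{\<omega>. r \<le> card {m\<in>G. \<omega> \<in> A m}} \<subseteq> (\<Union>T\<in>F. \<Inter>m\<in>T. A m)"
  proof
    fix \<omega> assume "\<omega> \<in> {\<omega>. r \<le> card {m\<in>G. \<omega> \<in> A m}}"
    then obtain T where "T \<subseteq> {m\<in>G. \<omega> \<in> A m}" "card T = r"
      by (auto elim: obtain_subset_with_card_n)
    then show "\<omega> \<in> (\<Union>T\<in>F. \<Inter>m\<in>T. A m)"
      by (auto simp: F_def)
  qed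
  then have "measure_pmf.prob P {\<omega>. r \<le> card {m\<in>G. \<omega> \<in> A m}} \<le>
             measure_pmf.prob P (\<Union>T\<in>F. \<Inter>m\<in>T. A m)"
    by (intro measure_pmf.finite_measure_mono) auto
  also have "\<dots> \<le> (\<Sum>T\<in>F. measure_pmf.prob P (\<Inter>m\<in>T. A m))"
    using F by (intro measure_pmf.finite_measure_subadditive_finite) auto
  also have "\<dots> \<le> (\<Sum>T\<in>F. q ^ r)"
  proof (rule sum_mono)
    fix T assume T: "T \<in> F"
    then have "measure_pmf.prob P (\<Inter>m\<in>T. A m) = (\<Prod>m\<in>T. measure_pmf.prob P (A m))"
      by (intro indep) (auto simp: F_def)
    also have "\<dots> \<le> (\<Prod>m\<in>T. q)"
      using T bound by (intro prod_mono) (auto simp: F_def)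
    finally show "measure_pmf.prob P (\<Inter>m\<in>T. A m) \<le> q ^ r"
      using T by (simp add: F_def)
  qed
  also have "\<dots> \<le> 2 ^ card G * q ^ r"
  proof -
    have "real (card F) \<le> 2 ^ card G"
      using card_mono[OF _ F(2)] G by (simp add: card_Pow)
    then show ?thesis
      using \<open>0 \<le> q\<close> by (simp add: mult_right_mono)
  qed
  finally show ?thesis .
qed

section \<open>The Lipschitz constant of a function on the arms\<close>

lemma finite_arm_pairs: "finite {F i j | i j. i < (K::nat) \<and> j < K \<and> i \<noteq> j}"
proof -
  have "{F i j | i j. i < K \<and> j < K \<and> i \<noteq> j} \<subseteq> (\<lambda>(i, j). F i j) ` ({..<K} \<times> {..<K})"
    by auto
  then show ?thesis
    by (rule finite_subset) auto
qed

lemma arm_pairs_nonempty: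
  assumes "2 \<le> (K::nat)"
  shows "{F i j | i j. i < K \<and> j < K \<and> i \<noteq> j} \<noteq> {}"
proof -
  have "F 0 1 \<in> {F i j | i j. i < K \<and> j < K \<and> i \<noteq> j}"
    using assms by (intro CollectI exI[of _ 0] exI[of _ 1]) auto
  then show ?thesis
    by auto
qed

lemma min_gap_le:
  assumes "i < K" "j < K" "i \<noteq> j"
  shows "min_gap K x \<le> norm (x i - x j)"
  unfolding min_gap_def using assms by (intro Min_le finite_arm_pairs) auto

lemma min_gap_pos:
  assumes "2 \<le> K" "inj_on x {..<K}"
  shows "0 < min_gap K x"
proof -
  have "min_gap K x \<in> {norm (x i - x j) | i j. i < K \<and> j < K \<and> i \<noteq> j}"
    unfolding min_gap_def by (rule Min_in[OF finite_arm_pairs arm_pairs_nonempty[OF assms(1)]])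
  then obtain i j where "i < K" "j < K" "i \<noteq> j" "min_gap K x = norm (x i - x j)"
    by auto
  with assms(2) show ?thesis
    by (auto simp: inj_on_def)
qed

lemma lip_const_ge:
  assumes "i < K" "j < K" "i \<noteq> j"
  shows "\<bar>f i - f j\<bar> / norm (x i - x j) \<le> lip_const K x f"
  unfolding lip_const_def using assms by (intro Max_ge finite_arm_pairs) auto

lemma lip_const_le:
  assumes "2 \<le> K" "inj_on x {..<K}"
    and "\<And>i j. i < K \<Longrightarrow> j < K \<Longrightarrow> i \<noteq> j \<Longrightarrow> \<bar>f i - f j\<bar> \<le> c * norm (x i - x j)"
  shows "lip_const K x f \<le> c"
  unfolding lip_const_def
proof (subst Max_le_iff[OF finite_arm_pairs arm_pairs_nonempty[OF assms(1)]], safe)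
  fix i j assume ij: "i < K" "j < K" "i \<noteq> j"
  then have "0 < norm (x i - x j)"
    using assms(2) by (auto simp: inj_on_def)
  with assms(3)[OF ij] show "\<bar>f i - f j\<bar> / norm (x i - x j) \<le> c"
    by (simp add: divide_le_eq)
qed

lemma lip_const_le_perturbed:
  assumes K: "2 \<le> K" "inj_on x {..<K}"
    and close: "\<And>i. i < K \<Longrightarrow> \<bar>h i - g i\<bar> \<le> t" and t: "2 * t \<le> e * min_gap K x"
  shows "lip_const K x h \<le> lip_const K x g + e"
proof (rule lip_const_le[OF K])
  fix i j assume ij: "i < K" "j < K" "i \<noteq> j"
  define d where "d = norm (x i - x j)"
  have gap: "0 < min_gap K x" "min_gap K x \<le> d"
    using min_gap_pos[OF K] min_gap_le[OF ij] by (simp_all add: d_def)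
  have "0 \<le> t"
    using close[of 0] K by force
  then have "0 \<le> e * min_gap K x"
    using t by linarith
  then have "0 \<le> e"
    using gap(1) by (simp add: zero_le_mult_iff)
  have "\<bar>g i - g j\<bar> \<le> lip_const K x g * d"
    using lip_const_ge[OF ij, of g x] gap by (simp add: d_def[symmetric] pos_divide_le_eq)
  moreover have "2 * t \<le> e * d"
    using t mult_left_mono[OF gap(2) \<open>0 \<le> e\<close>] by linarith
  moreover have "\<bar>h i - h j\<bar> \<le> \<bar>g i - g j\<bar> + \<bar>h i - g i\<bar> + \<bar>h j - g j\<bar>"
    by linarith
  ultimately show "\<bar>h i - h j\<bar> \<le> (lip_const K x g + e) * norm (x i - x j)"
    using close[OF ij(1)] close[OF ij(2)] by (simp add: d_def algebra_simps)
qed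

lemma lip_const_perturbed:
  assumes "2 \<le> K" "inj_on x {..<K}"
    and "\<And>i. i < K \<Longrightarrow> \<bar>h i - g i\<bar> \<le> t" and "2 * t \<le> e * min_gap K x"
  shows "\<bar>lip_const K x h - lip_const K x g\<bar> \<le> e"
proof -
  have "lip_const K x h \<le> lip_const K x g + e"
    by (rule lip_const_le_perturbed) (use assms in auto)
  moreover have "lip_const K x g \<le> lip_const K x h + e"
    by (rule lip_const_le_perturbed[where t = t]) (use assms in \<open>auto simp: abs_minus_commute\<close>)
  ultimately show ?thesis
    by linarith
qed

section \<open>Order statistics of perturbed sequences\<close>

lemma kth_largest_conv_nth_sort:
  "1 \<le> k \<Longrightarrow> k \<le> length xs \<Longrightarrow> kth_largest k xs = sort xs ! (length xs - k)"
  by (simp add: kth_largest_def rev_nth Suc_diff_le)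

lemma length_filter_sort: "length (filter P (sort xs)) = length (filter P xs)"
  by (metis mset_filter mset_sort size_mset)

lemma length_filter_map_upt: "length (filter P (map v [0..<M])) = card {m. m < M \<and> P (v m)}"
proof -
  have "{i. i < M \<and> P (map v [0..<M] ! i)} = {m. m < M \<and> P (v m)}"
    by auto
  then show ?thesis
    by (simp add: length_filter_conv_card)
qed

lemma le_length_filter_if_less_kth_largest:
  fixes xs :: "real list"
  assumes "1 \<le> k" "k \<le> length xs" "a < kth_largest k xs"
  shows "k \<le> length (filter (\<lambda>v. a < v) xs)"
proof -
  let ?s = "sort xs" and ?l = "length xs"
  have "{?l - k..<?l} \<subseteq> {i. i < ?l \<and> a < ?s ! i}"
  proof
    fix i assume "i \<in> {?l - k..<?l}"
    then have "i < ?l" "?s ! (?l - k) \<le> ?s ! i"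
      by (auto intro: sorted_nth_mono)
    with assms show "i \<in> {i. i < ?l \<and> a < ?s ! i}"
      by (simp add: kth_largest_conv_nth_sort)
  qed
  then have "k \<le> card {i. i < ?l \<and> a < ?s ! i}"
    using assms(2) card_mono[of "{i. i < ?l \<and> a < ?s ! i}" "{?l - k..<?l}"] by simp
  also have "\<dots> = length (filter (\<lambda>v. a < v) ?s)"
    by (simp add: length_filter_conv_card)
  finally show ?thesis
    by (simp only: length_filter_sort)
qed

lemma kth_largest_ge_if_le_length_filter:
  fixes xs :: "real list"
  assumes "1 \<le> k" "k \<le> length (filter (\<lambda>v. a \<le> v) xs)"
  shows "a \<le> kth_largest k xs"
proof (rule ccontr)
  let ?s = "sort xs" and ?l = "length xs"
  assume less: "\<not> a \<le> kth_largest k xs"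
  have "k \<le> ?l"
    using assms(2) length_filter_le order_trans by blast
  have "{i. i < ?l \<and> a \<le> ?s ! i} \<subseteq> {?l - k + 1..<?l}"
  proof
    fix i assume i: "i \<in> {i. i < ?l \<and> a \<le> ?s ! i}"
    have "\<not> i \<le> ?l - k"
    proof
      assume "i \<le> ?l - k"
      then have "?s ! i \<le> ?s ! (?l - k)"
        using assms(1) \<open>k \<le> ?l\<close> by (intro sorted_nth_mono) auto
      with less i \<open>k \<le> ?l\<close> assms(1) show False
        by (simp add: kth_largest_conv_nth_sort)
    qed
    with i show "i \<in> {?l - k + 1..<?l}"
      by auto
  qed
  then have "card {i. i < ?l \<and> a \<le> ?s ! i} \<le> k - 1"
    using card_mono[of "{?l - k + 1..<?l}"] \<open>k \<le> ?l\<close> assms(1) by fastforce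
  moreover have "length (filter (\<lambda>v. a \<le> v) xs) = card {i. i < ?l \<and> a \<le> ?s ! i}"
    unfolding length_filter_sort[of _ xs, symmetric] by (simp add: length_filter_conv_card)
  ultimately show False
    using assms by linarith
qed

lemma card_bad_ge_if_kth_largest_greater:
  assumes "1 \<le> k" "k \<le> M" "c < kth_largest k (map v [0..<M])"
    and "\<And>m. m < M \<Longrightarrow> \<not> bad m \<Longrightarrow> v m \<le> c"
  shows "k \<le> card {m\<in>{..<M}. bad m}"
proof -
  have "k \<le> length (filter (\<lambda>u. c < u) (map v [0..<M]))"
    using assms(1-3) by (intro le_length_filter_if_less_kth_largest) auto
  then have "k \<le> card {m. m < M \<and> c < v m}"
    unfolding length_filter_map_upt .
  also have "\<dots> \<le> card {m\<in>{..<M}. bad m}"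
  proof (rule card_mono)
    show "finite {m\<in>{..<M}. bad m}"
      by simp
    show "{m. m < M \<and> c < v m} \<subseteq> {m\<in>{..<M}. bad m}"
      using assms(4) by (auto simp: not_le[symmetric])
  qed
  finally show ?thesis .
qed

lemma card_bad_ge_if_kth_largest_less:
  assumes "1 \<le> k" "kth_largest k (map v [0..<M]) < c" "G \<subseteq> {..<M}"
    and "\<And>m. m \<in> G \<Longrightarrow> \<not> bad m \<Longrightarrow> c \<le> v m"
  shows "card G + 1 - k \<le> card {m\<in>G. bad m}"
proof -
  have "\<not> k \<le> length (filter (\<lambda>u. c \<le> u) (map v [0..<M]))"
    using kth_largest_ge_if_le_length_filter[of k c "map v [0..<M]"] assms(1,2) by linarith
  then have "card {m. m < M \<and> c \<le> v m} < k"
    unfolding length_filter_map_upt by simp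
  moreover have "card (G - {m\<in>G. bad m}) \<le> card {m. m < M \<and> c \<le> v m}"
    using assms(3,4) by (intro card_mono) auto
  moreover have "finite G"
    using assms(3) finite_subset by blast
  ultimately show ?thesis
    by (simp add: card_Diff_subset)
qed

lemma nat_ceiling_rank_bounds:
  fixes \<alpha> \<beta> :: real and M g :: nat
  assumes "0 < \<beta>" "\<beta> < \<alpha>" "1 \<le> M" "\<alpha> * real M \<le> real g"
  defines "k \<equiv> nat \<lceil>\<beta> * real M\<rceil>"
  shows "1 \<le> k" "k \<le> g" "\<beta> * real M \<le> real k" "(\<alpha> - \<beta>) * real M \<le> real (g + 1 - k)"
proof -
  have "0 < \<beta> * real M" "\<beta> * real M < \<alpha> * real M"
    using assms(1-3) by auto
  moreover have "real k = of_int \<lceil>\<beta> * real M\<rceil>"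
    using \<open>0 < \<beta> * real M\<close> by (simp add: k_def)
  ultimately have k: "0 < real k" "\<beta> * real M \<le> real k" "real k < real (g + 1)"
    and "real k < \<beta> * real M + 1"
    using ceiling_correct[of "\<beta> * real M"] assms(4) by auto
  then show "1 \<le> k" "k \<le> g" "\<beta> * real M \<le> real k"
    by (simp_all only: of_nat_0_less_iff of_nat_less_iff)
  then show "(\<alpha> - \<beta>) * real M \<le> real (g + 1 - k)"
    using \<open>real k < \<beta> * real M + 1\<close> assms(4) by (simp add: left_diff_distrib)
qed

section \<open>Deviation of the empirical means\<close>

lemma prob_bernoulli_mean_deviation:
  assumes "finite B" "B \<noteq> {}" "0 \<le> q" "q \<le> 1" "0 \<le> t"
  shows "measure_pmf.prob (Pi_pmf B False (\<lambda>_. bernoulli_pmf q))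
           {\<omega>. t \<le> \<bar>real (card {b\<in>B. \<omega> b}) / real (card B) - q\<bar>}
         \<le> 2 * exp (- 2 * real (card B) * t\<^sup>2)"
proof -
  interpret binomial_distribution "card B" q
    using assms by unfold_locales auto
  have "map_pmf (\<lambda>\<omega>. card {b\<in>B. \<omega> b}) (Pi_pmf B False (\<lambda>_. bernoulli_pmf q)) = binomial_pmf (card B) q"
    using assms by (intro binomial_pmf_altdef'[symmetric]) auto
  from this[symmetric] have "measure_pmf.prob (Pi_pmf B False (\<lambda>_. bernoulli_pmf q))
               {\<omega>. t \<le> \<bar>real (card {b\<in>B. \<omega> b}) / real (card B) - q\<bar>} =
             measure_pmf.prob (binomial_pmf (card B) q) {s. t \<le> \<bar>real s / real (card B) - q\<bar>}"
    by (simp add: vimage_def)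
  also have "\<dots> \<le> 2 * exp (- 2 * real (card B) * t\<^sup>2)"
    using prob_abs_ge'[of t] assms by (simp add: card_gt_0_iff)
  finally show ?thesis .
qed

lemma two_pow_mul_pow_le_exp:
  fixes c s :: real and K M r :: nat
  assumes "1 \<le> K" "0 < s" "ln (2 * real K) + 1 / s \<le> c" "s * real M \<le> real r"
  shows "2 ^ M * (2 * real K * exp (- 2 * c)) ^ r \<le> exp (- c * s * real M)"
proof -
  have "0 < ln (2 * real K)" "0 < 1 / s"
    using assms(1,2) by simp_all
  then have "0 \<le> c + 1 / s"
    using assms(3) by linarith
  have "2 * real K * exp (- 2 * c) = exp (ln (2 * real K) - 2 * c)"
    using assms(1) by (simp add: exp_diff exp_minus divide_inverse)
  also have "\<dots> \<le> exp (- (c + 1 / s))"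
    using assms(3) by simp
  finally have "(2 * real K * exp (- 2 * c)) ^ r \<le> exp (- (c + 1 / s)) ^ r"
    by (intro power_mono) auto
  also have "\<dots> = exp (- (c + 1 / s) * real r)"
    by (simp add: exp_of_nat_mult[symmetric] mult.commute)
  also have "\<dots> \<le> exp (- (c + 1 / s) * (s * real M))"
    using mult_left_mono_neg[OF assms(4), of "- (c + 1 / s)"] \<open>0 \<le> c + 1 / s\<close> by simp
  also have "- (c + 1 / s) * (s * real M) = - c * s * real M - real M"
    using assms(2) by (simp add: field_simps)
  finally have "2 ^ M * (2 * real K * exp (- 2 * c)) ^ r \<le> 2 ^ M * exp (- c * s * real M - real M)"
    by (simp add: mult_left_mono)
  also have "\<dots> \<le> exp (real M) * exp (- c * s * real M - real M)"
  proof -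
    have "(2::real) ^ M \<le> exp 1 ^ M"
      using exp_ge_add_one_self[of 1] by (intro power_mono) auto
    then show ?thesis
      by (simp add: exp_of_nat_mult[symmetric])
  qed
  finally show ?thesis
    by (simp flip: exp_add)
qed

definition pull_index :: "nat \<Rightarrow> nat \<Rightarrow> (nat \<Rightarrow> nat \<Rightarrow> nat) \<Rightarrow> (nat \<times> nat \<times> nat) set" where
  "pull_index M K n = {(m, i, k). m < M \<and> i < K \<and> k < n m i}"

lemma finite_pull_index: "finite (pull_index M K n)"
proof (rule finite_subset)
  show "pull_index M K n \<subseteq> Sigma {..<M} (\<lambda>m. Sigma {..<K} (\<lambda>i. {..<n m i}))"
    by (auto simp: pull_index_def)
qed auto

lemma reward_pmf_conv_Pi_pmf:
  "reward_pmf M K n \<mu> = Pi_pmf (pull_index M K n) False (\<lambda>(m, i, k). bernoulli_pmf (\<mu> m i))"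
  by (simp add: reward_pmf_def pull_index_def)

lemma emp_mean_conv_card:
  "emp_mean n \<omega> m i = real (card {b \<in> (\<lambda>k. (m, i, k)) ` {..<n m i}. \<omega> b}) / real (n m i)"
proof -
  have "{b \<in> (\<lambda>k. (m, i, k)) ` {..<n m i}. \<omega> b} = (\<lambda>k. (m, i, k)) ` ({..<n m i} \<inter> {k. \<omega> (m, i, k)})"
    by auto
  moreover have "card ((\<lambda>k. (m, i, k)) ` ({..<n m i} \<inter> {k. \<omega> (m, i, k)})) =
                 card ({..<n m i} \<inter> {k. \<omega> (m, i, k)})"
    by (rule card_image) (simp add: inj_on_def)
  ultimately show ?thesis
    by (simp add: emp_mean_def)
qed

locale episodic_bandit =
  fixes K M :: nat and \<mu> :: "nat \<Rightarrow> nat \<Rightarrow> real" and n :: "nat \<Rightarrow> nat \<Rightarrow> nat" and \<tau> :: real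
  assumes \<mu>_range: "\<forall>m<M. \<forall>i<K. 0 \<le> \<mu> m i \<and> \<mu> m i \<le> 1"
    and \<tau>_pos: "0 < \<tau>"
    and explore: "\<forall>m<M. \<forall>i<K. \<tau> \<le> real (n m i)"
begin

abbreviation reward_prob :: "(nat \<times> nat \<times> nat \<Rightarrow> bool) set \<Rightarrow> real" where
  "reward_prob \<equiv> measure_pmf.prob (reward_pmf M K n \<mu>)"

definition deviates :: "real \<Rightarrow> nat \<Rightarrow> (nat \<times> nat \<times> nat \<Rightarrow> bool) set" where
  "deviates t m = {\<omega>. \<exists>i<K. t \<le> \<bar>emp_mean n \<omega> m i - \<mu> m i\<bar>}"

lemma prob_emp_mean_deviation:
  assumes "m < M" "i < K" "0 \<le> t"
  shows "reward_prob {\<omega>. t \<le> \<bar>emp_mean n \<omega> m i - \<mu> m i\<bar>} \<le> 2 * exp (- 2 * \<tau> * t\<^sup>2)"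
proof -
  define B where "B = (\<lambda>k. (m, i, k)) ` {..<n m i}"
  define E where "E = {\<omega>. t \<le> \<bar>real (card {b\<in>B. \<omega> b}) / real (card B) - \<mu> m i\<bar>}"
  have "\<tau> \<le> real (n m i)"
    using explore assms by auto
  then have B: "card B = n m i" "B \<noteq> {}" "finite B" "B \<subseteq> pull_index M K n"
    using \<tau>_pos assms by (auto simp: B_def card_image inj_on_def pull_index_def lessThan_empty_iff)
  have "{\<omega>. t \<le> \<bar>emp_mean n \<omega> m i - \<mu> m i\<bar>} = E"
    unfolding E_def B(1) by (simp only: emp_mean_conv_card B_def)
  moreover have "determined_by E B"
    unfolding determined_by_def
  proof (intro allI impI)
    fix f g :: "nat \<times> nat \<times> nat \<Rightarrow> bool"
    assume "\<forall>b\<in>B. f b = g b"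
    then have "{b\<in>B. f b} = {b\<in>B. g b}"
      by auto
    then show "f \<in> E \<longleftrightarrow> g \<in> E"
      by (simp add: E_def)
  qed
  ultimately have "reward_prob {\<omega>. t \<le> \<bar>emp_mean n \<omega> m i - \<mu> m i\<bar>} =
                   measure_pmf.prob (Pi_pmf B False (\<lambda>(m, i, k). bernoulli_pmf (\<mu> m i))) E"
    unfolding reward_pmf_conv_Pi_pmf using B by (simp add: measure_Pi_pmf_determined finite_pull_index)
  also have "Pi_pmf B False (\<lambda>(m, i, k). bernoulli_pmf (\<mu> m i)) = Pi_pmf B False (\<lambda>_. bernoulli_pmf (\<mu> m i))"
    by (rule Pi_pmf_cong) (auto simp: B_def)
  also have "measure_pmf.prob \<dots> E \<le> 2 * exp (- 2 * real (card B) * t\<^sup>2)"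
    unfolding E_def using B assms \<mu>_range by (intro prob_bernoulli_mean_deviation) auto
  also have "\<dots> \<le> 2 * exp (- 2 * \<tau> * t\<^sup>2)"
    using \<open>\<tau> \<le> real (n m i)\<close> B(1) by (simp add: mult_right_mono)
  finally show ?thesis .
qed

lemma prob_deviates_le:
  assumes "m < M" "0 \<le> t"
  shows "reward_prob (deviates t m) \<le> 2 * real K * exp (- 2 * \<tau> * t\<^sup>2)"
proof -
  have "deviates t m = (\<Union>i<K. {\<omega>. t \<le> \<bar>emp_mean n \<omega> m i - \<mu> m i\<bar>})"
    by (auto simp: deviates_def)
  then have "reward_prob (deviates t m) \<le> (\<Sum>i<K. reward_prob {\<omega>. t \<le> \<bar>emp_mean n \<omega> m i - \<mu> m i\<bar>})"
    by (simp add: measure_pmf.finite_measure_subadditive_finite)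
  also have "\<dots> \<le> (\<Sum>i<K. 2 * exp (- 2 * \<tau> * t\<^sup>2))"
    using assms by (intro sum_mono prob_emp_mean_deviation) auto
  finally show ?thesis
    by simp
qed

lemma deviates_determined_by:
  assumes "m < M"
  shows "determined_by (deviates t m) {y \<in> pull_index M K n. fst y = m}"
  unfolding determined_by_def
proof (intro allI impI)
  fix f g :: "nat \<times> nat \<times> nat \<Rightarrow> bool"
  assume agree: "\<forall>y\<in>{y \<in> pull_index M K n. fst y = m}. f y = g y"
  have "emp_mean n f m i = emp_mean n g m i" if "i < K" for i
  proof -
    have "(\<Sum>k<n m i. of_bool (f (m, i, k)) :: real) = (\<Sum>k<n m i. of_bool (g (m, i, k)))"
      using agree that assms by (intro sum.cong) (auto simp: pull_index_def)
    then show ?thesis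
      unfolding emp_mean_def by simp
  qed
  then show "f \<in> deviates t m \<longleftrightarrow> g \<in> deviates t m"
    by (auto simp: deviates_def)
qed

lemma prob_INT_deviates:
  assumes "T \<subseteq> {..<M}"
  shows "reward_prob (\<Inter>m\<in>T. deviates t m) = (\<Prod>m\<in>T. reward_prob (deviates t m))"
  unfolding reward_pmf_conv_Pi_pmf
proof (rule measure_Pi_pmf_INT[where J = "\<lambda>m. {y \<in> pull_index M K n. fst y = m}"])
  show "finite T"
    using assms finite_subset by blast
  show "disjoint_family_on (\<lambda>m. {y \<in> pull_index M K n. fst y = m}) T"
    by (auto simp: disjoint_family_on_def)
  show "determined_by (deviates t m) {y \<in> pull_index M K n. fst y = m}" if "m \<in> T" for m
    using that assms by (intro deviates_determined_by) auto
qed (auto simp: finite_pull_index)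

lemma prob_card_deviates_ge:
  assumes "G \<subseteq> {..<M}" "1 \<le> K" "0 < s" "s * real M \<le> real r"
    and "0 \<le> t" "ln (2 * real K) + 1 / s \<le> \<tau> * t\<^sup>2"
  shows "reward_prob {\<omega>. r \<le> card {m\<in>G. \<omega> \<in> deviates t m}} \<le> exp (- (\<tau> * t\<^sup>2) * s * real M)"
proof -
  have "finite G"
    using assms(1) finite_subset by blast
  then have "reward_prob {\<omega>. r \<le> card {m\<in>G. \<omega> \<in> deviates t m}}
             \<le> 2 ^ card G * (2 * real K * exp (- 2 * \<tau> * t\<^sup>2)) ^ r"
    using assms by (intro prob_card_events_ge prob_INT_deviates prob_deviates_le) auto
  also have "\<dots> \<le> 2 ^ M * (2 * real K * exp (- 2 * (\<tau> * t\<^sup>2))) ^ r"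
    using card_mono[OF _ assms(1)] by (simp add: mult.assoc mult_right_mono power_increasing)
  also have "\<dots> \<le> exp (- (\<tau> * t\<^sup>2) * s * real M)"
    using assms by (intro two_pow_mul_pow_le_exp) auto
  finally show ?thesis .
qed

end

section \<open>Estimating the Lipschitz constant\<close>

locale lipschitz_episodic_bandit = episodic_bandit +
  fixes x :: "nat \<Rightarrow> real^'d::finite" and L :: real
  assumes K2: "2 \<le> K" and x_inj: "inj_on x {..<K}"
    and \<mu>_lip: "\<forall>m<M. \<forall>i<K. \<forall>j<K. \<bar>\<mu> m i - \<mu> m j\<bar> \<le> L * norm (x i - x j)"
begin

definition emp_lip :: "(nat \<times> nat \<times> nat \<Rightarrow> bool) \<Rightarrow> nat \<Rightarrow> real" where
  "emp_lip \<omega> m = lip_const K x (emp_mean n \<omega> m)"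

definition emp_lip_kth :: "nat \<Rightarrow> (nat \<times> nat \<times> nat \<Rightarrow> bool) \<Rightarrow> real" where
  "emp_lip_kth k \<omega> = kth_largest k (map (emp_lip \<omega>) [0..<M])"

lemma lip_const_le_L: "m < M \<Longrightarrow> lip_const K x (\<mu> m) \<le> L"
  using \<mu>_lip by (intro lip_const_le[OF K2 x_inj]) auto

lemma emp_lip_close:
  assumes "\<omega> \<notin> deviates t m" "2 * t \<le> e * min_gap K x"
  shows "\<bar>emp_lip \<omega> m - lip_const K x (\<mu> m)\<bar> \<le> e"
  unfolding emp_lip_def using assms
  by (intro lip_const_perturbed[OF K2 x_inj, where t = t]) (auto simp: deviates_def not_le)

lemma prob_emp_lip_kth_overestimates:
  assumes "1 \<le> k" "k \<le> M" "0 < s" "s * real M \<le> real k"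
    and "0 \<le> t" "2 * t \<le> e * min_gap K x" "ln (2 * real K) + 1 / s \<le> \<tau> * t\<^sup>2"
  shows "reward_prob {\<omega>. L + e < emp_lip_kth k \<omega>} \<le> exp (- (\<tau> * t\<^sup>2) * s * real M)"
proof -
  have "k \<le> card {m\<in>{..<M}. \<omega> \<in> deviates t m}" if "L + e < emp_lip_kth k \<omega>" for \<omega>
    using assms(1,2) that emp_lip_close[OF _ assms(6)] lip_const_le_L
    by (intro card_bad_ge_if_kth_largest_greater[where c = "L + e" and v = "emp_lip \<omega>"])
       (force simp: emp_lip_kth_def abs_le_iff)+
  then have "reward_prob {\<omega>. L + e < emp_lip_kth k \<omega>}
             \<le> reward_prob {\<omega>. k \<le> card {m\<in>{..<M}. \<omega> \<in> deviates t m}}"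
    by (intro measure_pmf.finite_measure_mono) auto
  also have "\<dots> \<le> exp (- (\<tau> * t\<^sup>2) * s * real M)"
    using assms K2 by (intro prob_card_deviates_ge) auto
  finally show ?thesis .
qed

lemma prob_emp_lip_kth_underestimates:
  assumes "1 \<le> k" "G \<subseteq> {..<M}" "\<forall>m\<in>G. L - \<epsilon>\<alpha> \<le> lip_const K x (\<mu> m)"
    and "0 < s" "s * real M \<le> real (card G + 1 - k)"
    and "0 \<le> t" "2 * t \<le> (\<epsilon>\<beta> - \<epsilon>\<alpha>) * min_gap K x" "ln (2 * real K) + 1 / s \<le> \<tau> * t\<^sup>2"
  shows "reward_prob {\<omega>. L > emp_lip_kth k \<omega> + \<epsilon>\<beta>} \<le> exp (- (\<tau> * t\<^sup>2) * s * real M)"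
proof -
  have "card G + 1 - k \<le> card {m\<in>G. \<omega> \<in> deviates t m}" if "L > emp_lip_kth k \<omega> + \<epsilon>\<beta>" for \<omega>
    using assms(1-3) that emp_lip_close[OF _ assms(7)]
    by (intro card_bad_ge_if_kth_largest_less[where c = "L - \<epsilon>\<beta>" and v = "emp_lip \<omega>" and M = M])
       (force simp: emp_lip_kth_def abs_le_iff)+
  then have "reward_prob {\<omega>. L > emp_lip_kth k \<omega> + \<epsilon>\<beta>}
             \<le> reward_prob {\<omega>. card G + 1 - k \<le> card {m\<in>G. \<omega> \<in> deviates t m}}"
    by (intro measure_pmf.finite_measure_mono) auto
  also have "\<dots> \<le> exp (- (\<tau> * t\<^sup>2) * s * real M)"
    using assms K2 by (intro prob_card_deviates_ge) auto
  finally show ?thesis .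
qed

end

theorem lemma1:
  fixes K M :: nat and x :: "nat \<Rightarrow> real^'d::finite" and \<mu> :: "nat \<Rightarrow> nat \<Rightarrow> real"
    and n :: "nat \<Rightarrow> nat \<Rightarrow> nat"
    and L \<alpha> \<epsilon>\<alpha> \<tau> \<beta> \<epsilon>\<beta> :: real
  assumes K2: "K \<ge> 2" and M1: "M \<ge> 1"
    and x_cube: "\<forall>i<K. \<forall>j. 0 \<le> x i $ j \<and> x i $ j \<le> 1"
    and x_inj: "inj_on x {..<K}"
    and L_pos: "L > 0"
    and \<mu>_range: "\<forall>m<M. \<forall>i<K. 0 \<le> \<mu> m i \<and> \<mu> m i \<le> 1"
    and \<mu>_lip: "\<forall>m<M. \<forall>i<K. \<forall>j<K. \<bar>\<mu> m i - \<mu> m j\<bar> \<le> L * norm (x i - x j)"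
    and \<alpha>_pos: "\<alpha> > 0" and \<epsilon>\<alpha>_pos: "\<epsilon>\<alpha> > 0"
    and learnable: "real (card {m. m < M \<and> lip_const K x (\<mu> m) \<ge> L - \<epsilon>\<alpha>}) \<ge> \<alpha> * real M"
    and \<tau>_pos: "\<tau> > 0"
    and explore: "\<forall>m<M. \<forall>i<K. real (n m i) \<ge> \<tau>"
    and \<beta>: "0 < \<beta>" "\<beta> < \<alpha>"
    and \<epsilon>\<beta>: "\<epsilon>\<beta> > \<epsilon>\<alpha>"
    and \<tau>_large: "\<tau> \<ge> 4 / ((min_gap K x)\<^sup>2 * (\<epsilon>\<beta> - \<epsilon>\<alpha>)\<^sup>2)
                   * (ln (2 * real K) + 1 / min \<beta> (\<alpha> - \<beta>))"
  shows "let P = measure_pmf.prob (reward_pmf M K n \<mu>);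
             lb = (\<lambda>\<omega>. kth_largest (nat \<lceil>\<beta> * real M\<rceil>)
                     (map (\<lambda>m. lip_const K x (emp_mean n \<omega> m)) [0..<M]));
             \<epsilon>' = \<epsilon>\<beta> - \<epsilon>\<alpha>
         in P {\<omega>. L > lb \<omega> + \<epsilon>\<beta>} + P {\<omega>. lb \<omega> > L + \<epsilon>'}
            \<le> 8 * real M * exp (- ((min_gap K x)\<^sup>2 * \<epsilon>'\<^sup>2 / 4) * min \<beta> (\<alpha> - \<beta>) * \<tau> * real M)"
proof -
  interpret lipschitz_episodic_bandit K M \<mu> n \<tau> x L
    using assms by unfold_locales auto
  define e s t k where "e = \<epsilon>\<beta> - \<epsilon>\<alpha>" and "s = min \<beta> (\<alpha> - \<beta>)"
    and "t = e * min_gap K x / 2" and "k = nat \<lceil>\<beta> * real M\<rceil>"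
  define G where "G = {m. m < M \<and> L - \<epsilon>\<alpha> \<le> lip_const K x (\<mu> m)}"
  have G: "G \<subseteq> {..<M}" "\<alpha> * real M \<le> real (card G)"
    using learnable by (auto simp: G_def)
  note k = nat_ceiling_rank_bounds[OF \<beta> M1 G(2), folded k_def]
  have s: "0 < s" "s * real M \<le> real k" "s * real M \<le> real (card G + 1 - k)"
    using \<beta> k(3,4) mult_right_mono[of s \<beta> "real M"] mult_right_mono[of s "\<alpha> - \<beta>" "real M"]
    by (auto simp: s_def)
  have "0 < e" "0 < min_gap K x"
    using \<epsilon>\<beta> min_gap_pos[OF K2 x_inj] by (simp_all add: e_def)
  then have t: "0 \<le> t" "2 * t \<le> e * min_gap K x" "ln (2 * real K) + 1 / s \<le> \<tau> * t\<^sup>2"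
    using \<tau>_large[folded e_def s_def] by (simp_all add: t_def field_simps)
  define X where "X = - ((min_gap K x)\<^sup>2 * e\<^sup>2 / 4) * s * \<tau> * real M"
  have X: "- (\<tau> * t\<^sup>2) * s * real M = X"
    by (simp add: X_def t_def field_simps)
  have lb: "kth_largest (nat \<lceil>\<beta> * real M\<rceil>) (map (\<lambda>m. lip_const K x (emp_mean n \<omega> m)) [0..<M])
            = emp_lip_kth k \<omega>" for \<omega>
    by (simp add: emp_lip_kth_def emp_lip_def[abs_def] k_def)
  have "reward_prob {\<omega>. L > emp_lip_kth k \<omega> + \<epsilon>\<beta>} \<le> exp X"
    unfolding X[symmetric] using k(1) G(1) s(1,3) t
    by (intro prob_emp_lip_kth_underestimates[where G = G]) (auto simp: G_def e_def)
  moreover have "reward_prob {\<omega>. emp_lip_kth k \<omega> > L + e} \<le> exp X"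
    unfolding X[symmetric] using k(1,2) card_mono[OF _ G(1)] s(1,2) t
    by (intro prob_emp_lip_kth_overestimates) auto
  moreover have "2 * exp X \<le> 8 * real M * exp X"
    using M1 by (intro mult_right_mono) auto
  ultimately show ?thesis
    unfolding Let_def lb e_def[symmetric] s_def[symmetric] X_def[symmetric] by linarith
qed

end
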